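(* Let $n\geq 2$ and $M>2n$ be integers, $\Omega>0$, $\omega_q=-\Omega+(q-1)\frac{2\Omega}{M-1}$, $q=1,\dots,M$. Let $\mu=\sum_{j=1}^n a_j\delta_{y_j}$ with $a_j\in\mathbb C\setminus\{0\}$ and pairwise distinct $y_j\in I(n,\Omega):=\big[-\frac{(n-1)\pi}{2\Omega},\frac{(n-1)\pi}{2\Omega}\big]$, $m_{\min}=\min_j|a_j|$, $d_{\min}=\min_{p\neq j}|y_p-y_j|$, and let $\mathbf Y=[\mu]+\mathbf W$ with $\|\mathbf W\|_\infty<\sigma$. Assume $$d_{\min}\geq \frac{5.88\pi e}{\Omega}\Big(\frac{\sigma}{m_{\min}}\Big)^{\frac{1}{2n-1}}.$$ If $\hat\mu=\sum_{j=1}^n\hat a_j\delta_{\hat y_j}$ with $\hat y_j\in I(n,\Omega)$ satisfies $\|[\hat\mu]-\mathbf Y\|_\infty<\sigma$, then $\hat\mu$ is within the $\frac{d_{\min}}{2}$-neighborhood of $\mu$, and after reordering the $\hat y_j$, $$|\hat y_j-y_j|\leq \frac{C(n)}{\Omega}\,SRF^{2n-2}\,\frac{\sigma}{m_{\min}},\qquad 1\le j\le n,$$ where $SRF=\frac{\pi}{\Omega d_{\min}}$ and $C(n)=n\,2^{4n-2}e^{2n}\pi^{-1/2}$.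
   Context: For a discrete measure $\nu=\sum_j b_j\delta_{x_j}$ on $\mathbb R$, $\mathcal F\nu(\omega)=\sum_j b_je^{ix_j\omega}$ and $[\nu]=(\mathcal F\nu(\omega_1),\dots,\mathcal F\nu(\omega_M))^T\in\mathbb C^M$. Given $\mu=\sum_{j=1}^n a_j\delta_{y_j}$ and $\delta>0$ such that the intervals $(y_k-\delta,y_k+\delta)$, $1\le k\le n$, are pairwise disjoint, a measure $\hat\mu=\sum_{j=1}^n\hat a_j\delta_{\hat y_j}$ is within the $\delta$-neighborhood of $\mu$ if each $\hat y_j$ lies in one and only one of these $n$ intervals. *)

theory Defs
  imports "HOL-Analysis.Analysis"
begin

text \<open>A discrete measure with n atoms is given by weights a and locations y, indexed by 1..n.\<close>

definition FT :: "(nat \<Rightarrow> complex) \<Rightarrow> (nat \<Rightarrow> real) \<Rightarrow> nat \<Rightarrow> real \<Rightarrow> complex" where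
  "FT a y n \<omega> = (\<Sum>j=1..n. a j * exp (\<i> * complex_of_real (y j * \<omega>)))"

definition sample_pt :: "real \<Rightarrow> nat \<Rightarrow> nat \<Rightarrow> real" where
  "sample_pt \<Omega> M q = - \<Omega> + (real q - 1) * (2 * \<Omega> / (real M - 1))"

definition sup_dist :: "(nat \<Rightarrow> complex) \<Rightarrow> (nat \<Rightarrow> real) \<Rightarrow> nat \<Rightarrow> real \<Rightarrow> nat \<Rightarrow> (nat \<Rightarrow> complex) \<Rightarrow> real" where
  "sup_dist a y n \<Omega> M Y = Max ((\<lambda>q. cmod (FT a y n (sample_pt \<Omega> M q) - Y q)) ` {1..M})"

definition d_min :: "(nat \<Rightarrow> real) \<Rightarrow> nat \<Rightarrow> real" where
  "d_min y n = Min {\<bar>y p - y j\<bar> | p j. p \<in> {1..n} \<and> j \<in> {1..n} \<and> p \<noteq> j}"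

definition m_min :: "(nat \<Rightarrow> complex) \<Rightarrow> nat \<Rightarrow> real" where
  "m_min a n = Min ((\<lambda>j. cmod (a j)) ` {1..n})"

definition I_int :: "nat \<Rightarrow> real \<Rightarrow> real set" where
  "I_int n \<Omega> = {- (real n - 1) * pi / (2 * \<Omega>) .. (real n - 1) * pi / (2 * \<Omega>)}"

definition within_nbhd :: "(nat \<Rightarrow> real) \<Rightarrow> nat \<Rightarrow> real \<Rightarrow> (nat \<Rightarrow> real) \<Rightarrow> bool" where
  "within_nbhd y n \<delta> yh \<longleftrightarrow>
     (\<forall>k\<in>{1..n}. \<forall>l\<in>{1..n}. k \<noteq> l \<longrightarrow> {y k - \<delta> <..< y k + \<delta>} \<inter> {y l - \<delta> <..< y l + \<delta>} = {}) \<and>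
     (\<forall>j\<in>{1..n}. \<exists>!k. k \<in> {1..n} \<and> yh j \<in> {y k - \<delta> <..< y k + \<delta>})"

definition C_const :: "nat \<Rightarrow> real" where
  "C_const n = real n * 2 ^ (4 * n - 2) * exp (2 * real n) / sqrt pi"

end

theory Submission
  imports Defs "HOL-Computational_Algebra.Polynomial"
begin

text \<open>
  Among the \<open>M\<close> samples pick \<open>2n\<close> equispaced frequencies \<open>-\<Omega> + r H\<close>, \<open>r < 2n\<close>, with
  \<open>\<Omega> \<le> (2n - 1) H \<le> 2\<Omega>\<close>. There both measures are exponential sums in the nodes
  \<open>z l = exp (i H y l)\<close> and \<open>zh q = exp (i H yh q)\<close>, differing by at most \<open>2\<sigma>\<close>. The
  finite-difference operator annihilating all \<open>zh q\<close> and all \<open>z p\<close> with \<open>p \<noteq> j\<close> leaves only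
  the \<open>j\<close>-th atom of \<open>\<mu>\<close>, so \<open>|a j| \<Prod>q |z j - zh q| \<Prod>p\<noteq>j |z j - z p| \<le> 2^(2n) \<sigma>\<close>, and
  Jordan's inequality turns these chords into distances. Since separation bounds
  \<open>\<Prod>p\<noteq>j |y j - y p|\<close> from below by \<open>d^(n-1)\<close> times factorials, the coefficients of
  \<open>\<Prod>q (x - yh q) - \<Prod>p (x - y p)\<close> in the Lagrange basis at the \<open>y p\<close> have moduli summing to
  some \<open>\<epsilon>\<close> below the claimed error. Comparing the two monic polynomials away from the nodes shows that every
  \<open>yh q\<close> lies within \<open>\<epsilon>\<close> of some \<open>y k\<close> and that every interval \<open>(y k - d/2, y k + d/2)\<close>
  contains some \<open>yh q\<close>; the separation hypothesis makes \<open>\<epsilon> < d/2\<close>, which yields the matching.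
\<close>

definition separated :: "real \<Rightarrow> (nat \<Rightarrow> real) \<Rightarrow> nat set \<Rightarrow> bool" where
  "separated d y P \<longleftrightarrow> (\<forall>p\<in>P. \<forall>q\<in>P. p \<noteq> q \<longrightarrow> d \<le> \<bar>y p - y q\<bar>)"

text \<open>The sum of the moduli of the coefficients of \<open>\<Prod>q. x - yh q\<close> minus \<open>\<Prod>p. x - y p\<close>
  in the Lagrange basis at the nodes \<open>y p\<close>.\<close>
definition lagrange_err :: "(nat \<Rightarrow> real) \<Rightarrow> (nat \<Rightarrow> real) \<Rightarrow> nat \<Rightarrow> real" where
  "lagrange_err y yh n =
     (\<Sum>j\<in>{1..n}. \<bar>\<Prod>q\<in>{1..n}. y j - yh q\<bar> / \<bar>\<Prod>p\<in>{1..n}-{j}. y j - y p\<bar>)"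

lemma separatedD: "separated d y P \<Longrightarrow> p \<in> P \<Longrightarrow> q \<in> P \<Longrightarrow> p \<noteq> q \<Longrightarrow> d \<le> \<bar>y p - y q\<bar>"
  unfolding separated_def by blast

lemma separated_subset: "separated d y P \<Longrightarrow> Q \<subseteq> P \<Longrightarrow> separated d y Q"
  unfolding separated_def by blast

lemma separated_uminus: "separated d (\<lambda>p. - y p) P \<longleftrightarrow> separated d y P"
  unfolding separated_def by (simp add: abs_minus_commute)

lemma separated_Max_ge:
  fixes y :: "nat \<Rightarrow> real"
  assumes "finite P" "P \<noteq> {}" "separated d y P" "\<forall>p\<in>P. d \<le> y p - c"
  shows "\<exists>p\<in>P. real (card P) * d \<le> y p - c"
  using assms
proof (induction "card P" arbitrary: P)
  case 0
  then show ?case by simp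
next
  case (Suc k)
  have "Max (y ` P) \<in> y ` P" using Suc.prems by (intro Max_in) auto
  then obtain p0 where p0: "p0 \<in> P" "y p0 = Max (y ` P)" by auto
  have p0_max: "y p \<le> y p0" if "p \<in> P" for p
    using p0(2) Suc.prems(1) that by simp
  show ?case
  proof (cases "P - {p0} = {}")
    case True
    then have "P = {p0}" using p0(1) by blast
    then show ?thesis using Suc.prems(4) by simp
  next
    case False
    have k: "k = card (P - {p0})" using Suc.hyps(2) p0(1) Suc.prems(1) by simp
    have "separated d y (P - {p0})" using Suc.prems(3) by (rule separated_subset) blast
    then have "\<exists>p\<in>P - {p0}. real (card (P - {p0})) * d \<le> y p - c"
      using Suc.prems(1,4) False by (intro Suc.hyps(1)[OF k]) auto
    then obtain p1 where p1: "p1 \<in> P - {p0}" "real k * d \<le> y p1 - c"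
      unfolding k by blast
    have "p1 \<in> P" "p0 \<noteq> p1" using p1(1) by auto
    then have "d \<le> \<bar>y p0 - y p1\<bar>" using Suc.prems(3) p0(1) by (intro separatedD)
    moreover have "y p1 \<le> y p0" using p0_max \<open>p1 \<in> P\<close> .
    moreover have "real (card P) * d = real k * d + d"
      by (simp flip: Suc.hyps(2) add: algebra_simps)
    ultimately have "real (card P) * d \<le> y p0 - c" using p1(2) by linarith
    with p0(1) show ?thesis by blast
  qed
qed

lemma separated_prod_ge:
  fixes y :: "nat \<Rightarrow> real"
  assumes "finite P" "separated d y P" "\<forall>p\<in>P. d \<le> y p - c" "d > 0"
  shows "d ^ card P * fact (card P) \<le> (\<Prod>p\<in>P. y p - c)"
  using assms
proof (induction "card P" arbitrary: P)
  case 0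
  then show ?case by simp
next
  case (Suc k)
  then have "P \<noteq> {}" by auto
  have "Max (y ` P) \<in> y ` P" using Suc.prems \<open>P \<noteq> {}\<close> by (intro Max_in) auto
  then obtain p0 where p0: "p0 \<in> P" "y p0 = Max (y ` P)" by auto
  have p0_max: "\<forall>p\<in>P. y p \<le> y p0" using p0 Suc.prems(1) by auto
  obtain p where "p \<in> P" "real (card P) * d \<le> y p - c"
    using separated_Max_ge[of P d y c] Suc.prems \<open>P \<noteq> {}\<close> by auto
  moreover have "y p \<le> y p0" using p0_max \<open>p \<in> P\<close> by simp
  ultimately have big: "real (Suc k) * d \<le> y p0 - c" unfolding Suc.hyps(2) by linarith
  moreover have "0 \<le> real (Suc k) * d" using Suc.prems(4) by simp
  ultimately have "0 \<le> y p0 - c" by linarith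
  have k: "k = card (P - {p0})" using Suc.hyps p0 Suc.prems by simp
  have IH: "d ^ k * fact k \<le> (\<Prod>p\<in>P - {p0}. y p - c)"
    using Suc.hyps(1)[OF k] Suc.prems separated_subset[of d y P "P - {p0}"] k by auto
  have "d ^ card P * fact (card P) = (real (Suc k) * d) * (d ^ k * fact k)"
    using Suc.hyps(2)[symmetric] by (simp add: algebra_simps)
  also have "\<dots> \<le> (y p0 - c) * (\<Prod>p\<in>P - {p0}. y p - c)"
    using big IH \<open>0 \<le> y p0 - c\<close> Suc.prems(4) by (intro mult_mono) auto
  also have "\<dots> = (\<Prod>p\<in>P. y p - c)"
    using prod.remove[OF Suc.prems(1) p0(1), of "\<lambda>p. y p - c"] by simp
  finally show ?case .
qed

lemma card_above_below:
  fixes y :: "nat \<Rightarrow> real"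
  assumes "separated d y {1..n}" "d > 0" "j \<in> {1..n}"
  shows "{1..n} - {j} = {p\<in>{1..n}. y j < y p} \<union> {p\<in>{1..n}. y p < y j}"
    and "card {p\<in>{1..n}. y j < y p} + card {p\<in>{1..n}. y p < y j} = n - 1"
proof -
  show split: "{1..n} - {j} = {p\<in>{1..n}. y j < y p} \<union> {p\<in>{1..n}. y p < y j}"
  proof (intro equalityI subsetI)
    fix p assume p: "p \<in> {1..n} - {j}"
    then have "d \<le> \<bar>y p - y j\<bar>" using assms(1,3) by (intro separatedD) auto
    then have "y p \<noteq> y j" using assms(2) by auto
    then show "p \<in> {p\<in>{1..n}. y j < y p} \<union> {p\<in>{1..n}. y p < y j}"
      using p by (auto simp: neq_iff)
  qed auto
  have "card ({p\<in>{1..n}. y j < y p} \<union> {p\<in>{1..n}. y p < y j})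
      = card {p\<in>{1..n}. y j < y p} + card {p\<in>{1..n}. y p < y j}"
    by (rule card_Un_disjoint) auto
  then show "card {p\<in>{1..n}. y j < y p} + card {p\<in>{1..n}. y p < y j} = n - 1"
    using split[symmetric] assms(3) by simp
qed

lemma separated_prod_others_ge:
  fixes y :: "nat \<Rightarrow> real"
  assumes sep: "separated d y {1..n}" and d: "d > 0" and j: "j \<in> {1..n}"
  shows "d ^ (n - 1) * (fact (card {p\<in>{1..n}. y j < y p}) * fact (card {p\<in>{1..n}. y p < y j}))
           \<le> \<bar>\<Prod>p\<in>{1..n} - {j}. y j - y p\<bar>"
proof -
  define Pa where "Pa = {p\<in>{1..n}. y j < y p}"
  define Pb where "Pb = {p\<in>{1..n}. y p < y j}"
  have split: "{1..n} - {j} = Pa \<union> Pb" and card: "card Pa + card Pb = n - 1"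
    using card_above_below[OF sep d j] by (auto simp: Pa_def Pb_def)
  have far: "d \<le> \<bar>y p - y j\<bar>" if "p \<in> {1..n}" "y p \<noteq> y j" for p
    using sep that j by (intro separatedD) auto
  have "\<forall>p\<in>Pa. d \<le> y p - y j"
  proof
    fix p assume "p \<in> Pa"
    then have "p \<in> {1..n}" "y j < y p" by (auto simp: Pa_def)
    then show "d \<le> y p - y j" using far[of p] by auto
  qed
  moreover have "separated d y Pa" using sep by (rule separated_subset) (auto simp: Pa_def)
  ultimately have above: "d ^ card Pa * fact (card Pa) \<le> (\<Prod>p\<in>Pa. y p - y j)"
    using d by (intro separated_prod_ge) (simp_all add: Pa_def)
  have "\<forall>p\<in>Pb. d \<le> (- y p) - (- y j)"
  proof
    fix p assume "p \<in> Pb"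
    then have "p \<in> {1..n}" "y p < y j" by (auto simp: Pb_def)
    then show "d \<le> (- y p) - (- y j)" using far[of p] by auto
  qed
  moreover have "separated d (\<lambda>p. - y p) Pb"
    unfolding separated_uminus using sep by (rule separated_subset) (auto simp: Pb_def)
  ultimately have below: "d ^ card Pb * fact (card Pb) \<le> (\<Prod>p\<in>Pb. (- y p) - (- y j))"
    using d by (intro separated_prod_ge) (simp_all add: Pb_def)
  have "d ^ (n - 1) * (fact (card Pa) * fact (card Pb))
      = (d ^ card Pa * fact (card Pa)) * (d ^ card Pb * fact (card Pb))"
    using card[symmetric] by (simp add: power_add algebra_simps)
  also have "\<dots> \<le> (\<Prod>p\<in>Pa. y p - y j) * (\<Prod>p\<in>Pb. (- y p) - (- y j))"
  proof (rule mult_mono[OF above below])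
    show "0 \<le> d ^ card Pb * fact (card Pb)" using d by simp
    have "0 \<le> d ^ card Pa * fact (card Pa)" using d by simp
    then show "0 \<le> (\<Prod>p\<in>Pa. y p - y j)" using above by linarith
  qed
  also have "\<dots> = (\<Prod>p\<in>Pa. \<bar>y j - y p\<bar>) * (\<Prod>p\<in>Pb. \<bar>y j - y p\<bar>)"
  proof -
    have "(\<Prod>p\<in>Pa. y p - y j) = (\<Prod>p\<in>Pa. \<bar>y j - y p\<bar>)"
      by (rule prod.cong) (auto simp: Pa_def)
    moreover have "(\<Prod>p\<in>Pb. (- y p) - (- y j)) = (\<Prod>p\<in>Pb. \<bar>y j - y p\<bar>)"
      by (rule prod.cong) (auto simp: Pb_def)
    ultimately show ?thesis by simp
  qed
  also have "\<dots> = \<bar>\<Prod>p\<in>{1..n} - {j}. y j - y p\<bar>"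
    unfolding split abs_prod by (rule prod.union_disjoint[symmetric]) (auto simp: Pa_def Pb_def)
  finally show ?thesis by (simp add: Pa_def Pb_def)
qed

lemma bij_betw_rank:
  fixes y :: "nat \<Rightarrow> real"
  assumes sep: "separated d y {1..n}" and d: "d > 0"
  shows "bij_betw (\<lambda>j. card {p\<in>{1..n}. y j < y p}) {1..n} {..<n}"
proof -
  define rank where "rank j = card {p\<in>{1..n}. y j < y p}" for j
  have less: "rank j < rank i" if "i \<in> {1..n}" "j \<in> {1..n}" "y i < y j" for i j
    unfolding rank_def using that by (intro psubset_card_mono) auto
  have "inj_on rank {1..n}"
  proof (rule inj_onI, rule ccontr)
    fix i j assume "i \<in> {1..n}" "j \<in> {1..n}" "rank i = rank j" "i \<noteq> j"
    then have "d \<le> \<bar>y i - y j\<bar>" using sep \<open>i \<in> {1..n}\<close> \<open>j \<in> {1..n}\<close> by (intro separatedD)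
    then have "y i < y j \<or> y j < y i" using d by linarith
    then show False
      using less[of i j] less[of j i] \<open>i \<in> {1..n}\<close> \<open>j \<in> {1..n}\<close> \<open>rank i = rank j\<close> by auto
  qed
  moreover have "rank j < n" if "j \<in> {1..n}" for j
  proof -
    have "1 \<le> n" using that by simp
    then show ?thesis using card_above_below(2)[OF sep d that] unfolding rank_def by linarith
  qed
  then have "rank ` {1..n} \<subseteq> {..<n}" by auto
  ultimately have "rank ` {1..n} = {..<n}"
    by (intro card_subset_eq) (auto simp: card_image)
  with \<open>inj_on rank {1..n}\<close> show ?thesis unfolding rank_def bij_betw_def by simp
qed

lemma sum_inverse_fact_sq:
  assumes "n \<ge> 1"
  shows "(\<Sum>k<n. 1 / (fact k * fact (n - 1 - k))^2 :: real)
           = real ((2*(n-1)) choose (n-1)) / (fact (n-1))^2"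
proof -
  define N where "N = n - 1"
  have "1 / (fact k * fact (N - k))^2 = real ((N choose k)^2) / (fact N)^2" if "k \<le> N" for k
  proof -
    have "(fact N :: real) = fact k * fact (N - k) * real (N choose k)"
      using binomial_fact_lemma[OF that] by (metis of_nat_fact of_nat_mult)
    moreover have "real (N choose k) \<noteq> 0" using that by simp
    ultimately show ?thesis by (simp add: power_mult_distrib)
  qed
  then have "(\<Sum>k<n. 1 / (fact k * fact (n - 1 - k))^2 :: real)
      = (\<Sum>k\<le>N. real ((N choose k)^2) / (fact N)^2)"
    using assms by (intro sum.cong) (auto simp: N_def)
  also have "\<dots> = real ((2*N) choose N) / (fact N)^2"
    unfolding sum_divide_distrib[symmetric] of_nat_sum[symmetric] choose_square_sum ..
  finally show ?thesis by (simp add: N_def)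
qed

lemma linear_factors_prod:
  fixes y :: "nat \<Rightarrow> 'a::field"
  assumes "finite S"
  shows "degree (\<Prod>p\<in>S. [:- y p, 1:]) = card S"
    and "lead_coeff (\<Prod>p\<in>S. [:- y p, 1:]) = 1"
    and "poly (\<Prod>p\<in>S. [:- y p, 1:]) x = (\<Prod>p\<in>S. x - y p)"
proof -
  show deg: "degree (\<Prod>p\<in>S. [:- y p, 1:]) = card S"
    using assms by (simp add: degree_prod_eq_sum_degree)
  show "lead_coeff (\<Prod>p\<in>S. [:- y p, 1:]) = 1"
    unfolding lead_coeff_prod by simp
  show "poly (\<Prod>p\<in>S. [:- y p, 1:]) x = (\<Prod>p\<in>S. x - y p)"
    by (simp add: poly_prod)
qed

text \<open>Lagrange interpolation of the monic polynomial \<open>\<Prod>q. x - yh q - \<Prod>p. x - y p\<close>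
  of degree \<open>< n\<close> at the nodes \<open>y p\<close>.\<close>
lemma prod_diff_lagrange_expansion:
  fixes y yh :: "nat \<Rightarrow> 'a::field"
  assumes inj: "inj_on y {1..n}"
  shows "(\<Prod>q\<in>{1..n}. x - yh q) - (\<Prod>p\<in>{1..n}. x - y p) =
     (\<Sum>j\<in>{1..n}. (\<Prod>q\<in>{1..n}. y j - yh q) / (\<Prod>p\<in>{1..n}-{j}. y j - y p)
                   * (\<Prod>p\<in>{1..n}-{j}. x - y p))"
proof -
  define c where "c j = (\<Prod>q\<in>{1..n}. y j - yh q) / (\<Prod>p\<in>{1..n}-{j}. y j - y p)" for j
  define F where "F = (\<Prod>q\<in>{1..n}. [:- yh q, 1:])"
  define G where "G = (\<Prod>p\<in>{1..n}. [:- y p, 1:])"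
  define L where "L = (\<Sum>j\<in>{1..n}. smult (c j) (\<Prod>p\<in>{1..n}-{j}. [:- y p, 1:]))"
  have poly_L: "poly L t = (\<Sum>j\<in>{1..n}. c j * (\<Prod>p\<in>{1..n}-{j}. t - y p))" for t
    by (simp add: L_def poly_sum linear_factors_prod)
  have deg_L: "degree L \<le> n - 1"
    unfolding L_def
  proof (rule degree_sum_le)
    fix j assume "j \<in> {1..n}"
    then have "degree (\<Prod>p\<in>{1..n}-{j}. [:- y p, 1:]) = n - 1"
      by (simp add: linear_factors_prod)
    then show "degree (smult (c j) (\<Prod>p\<in>{1..n}-{j}. [:- y p, 1:])) \<le> n - 1"
      using degree_smult_le[of "c j"] by (metis le_trans)
  qed simp
  have "coeff L n = 0"
  proof (cases "n = 0")
    case False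
    then show ?thesis using deg_L by (intro coeff_eq_0) linarith
  qed (simp add: L_def)
  have "F = G + L"
  proof (rule poly_eqI_degree_lead_coeff[where n = n and A = "y ` {1..n}"])
    have "coeff F n = 1" using linear_factors_prod(1,2)[of "{1..n}" yh] by (simp add: F_def)
    moreover have "coeff G n = 1" using linear_factors_prod(1,2)[of "{1..n}" y] by (simp add: G_def)
    ultimately show "coeff F n = coeff (G + L) n" using \<open>coeff L n = 0\<close> by simp
    show "n \<le> card (y ` {1..n})" using card_image[OF inj] by simp
    show "degree F \<le> n" by (simp add: F_def linear_factors_prod)
    show "degree (G + L) \<le> n"
      using deg_L by (intro degree_add_le) (auto simp: G_def linear_factors_prod)
  next
    fix z assume "z \<in> y ` {1..n}"
    then obtain k where k: "k \<in> {1..n}" "z = y k" by blast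
    have nonzero: "(\<Prod>p\<in>{1..n}-{k}. y k - y p) \<noteq> 0"
      using inj k(1) by (auto simp: inj_on_eq_iff)
    have "(\<Prod>p\<in>{1..n}-{j}. y k - y p) = 0" if "j \<in> {1..n} - {k}" for j
      using that k(1) by (intro prod_zero) auto
    then have "(\<Sum>j\<in>{1..n}-{k}. c j * (\<Prod>p\<in>{1..n}-{j}. y k - y p)) = 0"
      by (intro sum.neutral ballI) (metis mult_zero_right)
    then have "poly L (y k) = c k * (\<Prod>p\<in>{1..n}-{k}. y k - y p)"
      unfolding poly_L sum.remove[OF finite_atLeastAtMost k(1)] by simp
    also have "\<dots> = (\<Prod>q\<in>{1..n}. y k - yh q)" using nonzero by (simp add: c_def)
    finally have "poly L (y k) = (\<Prod>q\<in>{1..n}. y k - yh q)" .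
    moreover have "poly G (y k) = 0"
      unfolding G_def linear_factors_prod(3)[OF finite_atLeastAtMost] using k(1) by (intro prod_zero) auto
    ultimately show "poly F z = poly (G + L) z"
      using k(2) by (simp add: F_def linear_factors_prod)
  qed
  then have "poly F x - poly G x = poly L x" by simp
  then show ?thesis unfolding F_def G_def linear_factors_prod(3)[OF finite_atLeastAtMost] poly_L c_def .
qed

lemma lagrange_err_nonneg: "0 \<le> lagrange_err y yh n"
  unfolding lagrange_err_def by (intro sum_nonneg) auto

lemma abs_prod_diff_le_lagrange_err:
  fixes y yh :: "nat \<Rightarrow> real"
  assumes inj: "inj_on y {1..n}" and rho: "\<rho> > 0" and far: "\<forall>k\<in>{1..n}. \<rho> \<le> \<bar>x - y k\<bar>"
  shows "\<bar>(\<Prod>q\<in>{1..n}. x - yh q) - (\<Prod>p\<in>{1..n}. x - y p)\<bar>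
           \<le> lagrange_err y yh n / \<rho> * \<bar>\<Prod>p\<in>{1..n}. x - y p\<bar>"
proof -
  have basis: "\<bar>\<Prod>p\<in>{1..n}-{j}. x - y p\<bar> \<le> \<bar>\<Prod>p\<in>{1..n}. x - y p\<bar> / \<rho>"
    if j: "j \<in> {1..n}" for j
  proof -
    have "\<rho> * \<bar>\<Prod>p\<in>{1..n}-{j}. x - y p\<bar> \<le> \<bar>x - y j\<bar> * \<bar>\<Prod>p\<in>{1..n}-{j}. x - y p\<bar>"
      using far j by (intro mult_right_mono) auto
    also have "\<dots> = \<bar>\<Prod>p\<in>{1..n}. x - y p\<bar>"
      using prod.remove[OF finite_atLeastAtMost j, of "\<lambda>p. x - y p"] by (simp add: abs_mult)
    finally show ?thesis using rho by (simp add: field_simps)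
  qed
  have "\<bar>(\<Prod>q\<in>{1..n}. x - yh q) - (\<Prod>p\<in>{1..n}. x - y p)\<bar>
      \<le> (\<Sum>j\<in>{1..n}. \<bar>(\<Prod>q\<in>{1..n}. y j - yh q) / (\<Prod>p\<in>{1..n}-{j}. y j - y p)
                         * (\<Prod>p\<in>{1..n}-{j}. x - y p)\<bar>)"
    unfolding prod_diff_lagrange_expansion[OF inj] by (rule sum_abs)
  also have "\<dots> \<le> (\<Sum>j\<in>{1..n}. \<bar>\<Prod>q\<in>{1..n}. y j - yh q\<bar> / \<bar>\<Prod>p\<in>{1..n}-{j}. y j - y p\<bar>
                         * (\<bar>\<Prod>p\<in>{1..n}. x - y p\<bar> / \<rho>))"
    unfolding abs_mult abs_divide by (intro sum_mono mult_left_mono basis) auto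
  also have "\<dots> = lagrange_err y yh n / \<rho> * \<bar>\<Prod>p\<in>{1..n}. x - y p\<bar>"
    by (simp add: lagrange_err_def sum_distrib_right sum_divide_distrib)
  finally show ?thesis .
qed

lemma lagrange_err_same_sign:
  fixes y yh :: "nat \<Rightarrow> real"
  assumes inj: "inj_on y {1..n}" and rho: "\<rho> > 0" and far: "\<forall>k\<in>{1..n}. \<rho> \<le> \<bar>x - y k\<bar>"
    and small: "lagrange_err y yh n < \<rho>"
  shows "0 < (\<Prod>q\<in>{1..n}. x - yh q) * (\<Prod>p\<in>{1..n}. x - y p)"
proof -
  define f where "f = (\<Prod>q\<in>{1..n}. x - yh q)"
  define g where "g = (\<Prod>p\<in>{1..n}. x - y p)"
  have "x - y p \<noteq> 0" if "p \<in> {1..n}" for p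
    using far rho that by fastforce
  then have "g \<noteq> 0" by (simp add: g_def)
  have "\<bar>f - g\<bar> \<le> lagrange_err y yh n / \<rho> * \<bar>g\<bar>"
    unfolding f_def g_def by (rule abs_prod_diff_le_lagrange_err[OF inj rho far])
  also have "\<dots> < \<bar>g\<bar>" using small rho \<open>g \<noteq> 0\<close> by (simp add: field_simps)
  finally have "\<bar>f - g\<bar> * \<bar>g\<bar> < \<bar>g\<bar> * \<bar>g\<bar>"
    using \<open>g \<noteq> 0\<close> by (intro mult_strict_right_mono) auto
  then have "\<bar>(f - g) * g\<bar> < g * g" by (simp add: abs_mult abs_mult_self_eq)
  then have "0 < g * g + (f - g) * g" by linarith
  then show ?thesis by (simp add: f_def g_def algebra_simps)
qed

lemma lagrange_err_close_node:
  fixes y yh :: "nat \<Rightarrow> real"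
  assumes inj: "inj_on y {1..n}" and q: "q \<in> {1..n}"
  shows "\<exists>k\<in>{1..n}. \<bar>yh q - y k\<bar> \<le> lagrange_err y yh n"
proof (rule ccontr)
  assume "\<not> ?thesis"
  then have far: "\<forall>k\<in>{1..n}. lagrange_err y yh n < \<bar>yh q - y k\<bar>" by auto
  define \<rho> where "\<rho> = Min ((\<lambda>k. \<bar>yh q - y k\<bar>) ` {1..n})"
  have "\<rho> \<in> (\<lambda>k. \<bar>yh q - y k\<bar>) ` {1..n}" unfolding \<rho>_def using q by (intro Min_in) auto
  then have "lagrange_err y yh n < \<rho>" using far by auto
  moreover have "\<forall>k\<in>{1..n}. \<rho> \<le> \<bar>yh q - y k\<bar>" by (simp add: \<rho>_def)
  moreover have "0 < \<rho>" using lagrange_err_nonneg calculation(1) by (rule le_less_trans)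
  ultimately have "0 < (\<Prod>q'\<in>{1..n}. yh q - yh q') * (\<Prod>p\<in>{1..n}. yh q - y p)"
    by (intro lagrange_err_same_sign[OF inj])
  moreover have "(\<Prod>q'\<in>{1..n}. yh q - yh q') = 0" using q by (intro prod_zero) auto
  ultimately show False by (metis less_irrefl mult_zero_left)
qed

lemma prod_nodes_sign_change:
  fixes y :: "nat \<Rightarrow> real"
  assumes sep: "separated d y {1..n}" and d: "d > 0" and k: "k \<in> {1..n}"
  shows "(\<Prod>p\<in>{1..n}. y k - d/2 - y p) * (\<Prod>p\<in>{1..n}. y k + d/2 - y p) < 0"
proof -
  have "(\<Prod>p\<in>{1..n}. y k - d/2 - y p) * (\<Prod>p\<in>{1..n}. y k + d/2 - y p)
      = (\<Prod>p\<in>{1..n}. (y k - d/2 - y p) * (y k + d/2 - y p))"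
    by (simp add: prod.distrib)
  also have "\<dots> = (- (d/2) * (d/2)) * (\<Prod>p\<in>{1..n}-{k}. (y k - d/2 - y p) * (y k + d/2 - y p))"
    by (subst prod.remove[OF finite_atLeastAtMost k]) simp
  also have "\<dots> < 0"
  proof (rule mult_neg_pos)
    show "- (d/2) * (d/2) < 0" using d by simp
    show "0 < (\<Prod>p\<in>{1..n}-{k}. (y k - d/2 - y p) * (y k + d/2 - y p))"
    proof (rule prod_pos)
      fix p assume "p \<in> {1..n}-{k}"
      then have "d \<le> \<bar>y p - y k\<bar>" using sep k by (intro separatedD) auto
      then have "y k + d \<le> y p \<or> y p \<le> y k - d" by linarith
      then show "0 < (y k - d/2 - y p) * (y k + d/2 - y p)"
        using d by (auto intro: mult_pos_pos mult_neg_neg)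
    qed
  qed
  finally show ?thesis .
qed

lemma IVT_sign_change:
  fixes f :: "real \<Rightarrow> real"
  assumes "continuous_on {a..b} f" "f a * f b < 0" "a \<le> b"
  shows "\<exists>x\<in>{a<..<b}. f x = 0"
proof -
  have "f a < 0 \<and> 0 < f b \<or> f b < 0 \<and> 0 < f a"
    using assms(2) by (auto simp: mult_less_0_iff)
  then obtain x where x: "a \<le> x" "x \<le> b" "f x = 0"
    using IVT'[of f a 0 b] IVT2'[of f b 0 a] assms(1,3) by (elim disjE conjE) auto
  moreover have "x \<noteq> a" "x \<noteq> b" using x(3) assms(2) by auto
  ultimately show ?thesis by auto
qed

lemma lagrange_err_root_near_node:
  fixes y yh :: "nat \<Rightarrow> real"
  assumes inj: "inj_on y {1..n}" and sep: "separated d y {1..n}" and d: "d > 0"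
    and k: "k \<in> {1..n}" and small: "lagrange_err y yh n < d/2"
  shows "\<exists>q\<in>{1..n}. yh q \<in> {y k - d/2 <..< y k + d/2}"
proof -
  define f where "f x = (\<Prod>q\<in>{1..n}. x - yh q)" for x
  define g where "g x = (\<Prod>p\<in>{1..n}. x - y p)" for x
  have same_sign: "0 < f x * g x" if x: "\<bar>x - y k\<bar> = d/2" for x
  proof -
    have far: "\<forall>p\<in>{1..n}. d/2 \<le> \<bar>x - y p\<bar>"
    proof
      fix p assume p: "p \<in> {1..n}"
      show "d/2 \<le> \<bar>x - y p\<bar>"
      proof (cases "p = k")
        case False
        then have "d \<le> \<bar>y p - y k\<bar>" using sep p k by (intro separatedD)
        then show ?thesis using x by linarith
      qed (use x in simp)
    qed
    have "0 < d/2" using d by simp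
    then show ?thesis unfolding f_def g_def by (rule lagrange_err_same_sign[OF inj _ far small])
  qed
  define a b where "a = y k - d/2" and "b = y k + d/2"
  have "0 < (f a * g a) * (f b * g b)"
    using d by (intro mult_pos_pos same_sign) (simp_all add: a_def b_def)
  then have "0 < (f a * f b) * (g a * g b)" by (simp only: ac_simps)
  moreover have "g a * g b < 0"
    unfolding g_def a_def b_def by (rule prod_nodes_sign_change[OF sep d k])
  ultimately have "f a * f b < 0" using zero_less_mult_iff[of "f a * f b" "g a * g b"] by auto
  moreover have "continuous_on {a..b} f" unfolding f_def by (intro continuous_intros)
  ultimately obtain x where "x \<in> {a<..<b}" "f x = 0"
    using IVT_sign_change[of a b f] d by (auto simp: a_def b_def)
  then show ?thesis by (auto simp: f_def a_def b_def)
qed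

text \<open>\<open>diff_op [w\<^sub>1, \<dots>, w\<^sub>k] u\<close> applies \<open>(E - w\<^sub>k) \<cdots> (E - w\<^sub>1)\<close> to \<open>u\<close>, where \<open>E\<close> is the shift
  \<open>u \<mapsto> (\<lambda>r. u (Suc r))\<close>; it annihilates the exponentials \<open>r \<mapsto> w\<^sub>i ^ r\<close>.\<close>
fun diff_op :: "'a::comm_ring list \<Rightarrow> (nat \<Rightarrow> 'a) \<Rightarrow> nat \<Rightarrow> 'a" where
  "diff_op [] u = u"
| "diff_op (w # ws) u = diff_op ws (\<lambda>r. u (Suc r) - w * u r)"

lemma diff_op_exp_sum:
  fixes c z :: "'b \<Rightarrow> 'a::comm_ring_1"
  shows "diff_op ws (\<lambda>r. \<Sum>l\<in>L. c l * z l ^ r) = (\<lambda>r. \<Sum>l\<in>L. c l * (\<Prod>w\<leftarrow>ws. z l - w) * z l ^ r)"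
proof (induction ws arbitrary: c)
  case (Cons w ws)
  have "(\<lambda>r. (\<Sum>l\<in>L. c l * z l ^ Suc r) - w * (\<Sum>l\<in>L. c l * z l ^ r))
      = (\<lambda>r. \<Sum>l\<in>L. (c l * (z l - w)) * z l ^ r)"
    by (auto simp: sum_distrib_left sum_subtractf[symmetric] algebra_simps intro!: sum.cong ext)
  then show ?case using Cons[of "\<lambda>l. c l * (z l - w)"] by (simp add: mult.assoc)
qed simp

lemma diff_op_diff: "diff_op ws (\<lambda>r. u r - v r) = (\<lambda>r. diff_op ws u r - diff_op ws v r)"
proof (induction ws arbitrary: u v)
  case (Cons w ws)
  have "(\<lambda>r. u (Suc r) - v (Suc r) - w * (u r - v r))
      = (\<lambda>r. (u (Suc r) - w * u r) - (v (Suc r) - w * v r))"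
    by (auto simp: algebra_simps)
  then show ?case using Cons by simp
qed simp

lemma norm_diff_op_le:
  fixes u :: "nat \<Rightarrow> 'a::{real_normed_div_algebra, comm_ring}"
  assumes "\<forall>w\<in>set ws. norm w \<le> 1" "\<forall>r\<le>R + length ws. norm (u r) \<le> B" "r \<le> R"
  shows "norm (diff_op ws u r) \<le> 2 ^ length ws * B"
  using assms
proof (induction ws arbitrary: u B)
  case (Cons w ws)
  have "norm (u (Suc r) - w * u r) \<le> 2 * B" if "r \<le> R + length ws" for r
  proof -
    have "norm (u (Suc r) - w * u r) \<le> norm (u (Suc r)) + norm w * norm (u r)"
      by (metis norm_mult norm_triangle_ineq4)
    also have "\<dots> \<le> B + 1 * B"
      using Cons.prems that by (intro add_mono mult_mono) auto
    finally show ?thesis by simp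
  qed
  then have "norm (diff_op ws (\<lambda>r. u (Suc r) - w * u r) r) \<le> 2 ^ length ws * (2 * B)"
    using Cons by auto
  then show ?case by simp
qed simp

text \<open>Applying \<open>diff_op\<close> with the \<open>2n - 1\<close> nodes \<open>zh q\<close> and \<open>z p\<close>, \<open>p \<noteq> j\<close>, kills both
  exponential sums except for their \<open>j\<close>-th term.\<close>
lemma exp_sum_annihilation_bound:
  fixes c ch z zh :: "nat \<Rightarrow> complex"
  assumes j: "j \<in> {1..n}"
    and unit: "\<forall>l\<in>{1..n}. norm (z l) \<le> 1 \<and> norm (zh l) \<le> 1"
    and close: "\<forall>r\<le>2*n-1. norm ((\<Sum>l\<in>{1..n}. ch l * zh l ^ r) - (\<Sum>l\<in>{1..n}. c l * z l ^ r)) \<le> B"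
  shows "norm (c j) * norm (\<Prod>q\<in>{1..n}. z j - zh q) * norm (\<Prod>p\<in>{1..n}-{j}. z j - z p)
           \<le> 2 ^ (2*n-1) * B"
proof -
  define others where "others = filter (\<lambda>p. p \<noteq> j) [1..<n+1]"
  define ws where "ws = map zh [1..<n+1] @ map z others"
  have set_others: "set others = {1..n} - {j}" by (auto simp: others_def)
  moreover have "distinct others" by (simp add: others_def)
  ultimately have "length others = n - 1"
    using j distinct_card[of others] by simp
  then have len: "length ws = 2*n-1" using j by (simp add: ws_def)
  have set_ws: "set ws = zh ` {1..n} \<union> z ` ({1..n} - {j})"
    using set_others by (auto simp: ws_def)
  have "(\<Prod>w\<leftarrow>ws. z j - w) = (\<Prod>q\<leftarrow>[1..<n+1]. z j - zh q) * (\<Prod>p\<leftarrow>others. z j - z p)"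
    by (simp add: ws_def o_def)
  also have "\<dots> = (\<Prod>q\<in>set [1..<n+1]. z j - zh q) * (\<Prod>p\<in>set others. z j - z p)"
    using \<open>distinct others\<close> by (simp only: prod.distinct_set_conv_list distinct_upt)
  also have "set [1..<n+1] = {1..n}" by auto
  finally have prod_ws: "(\<Prod>w\<leftarrow>ws. z j - w) = (\<Prod>q\<in>{1..n}. z j - zh q) * (\<Prod>p\<in>{1..n}-{j}. z j - z p)"
    unfolding set_others .
  have kill: "(\<Prod>w\<leftarrow>ws. v - w) = 0" if "v \<in> set ws" for v
    using that by (auto simp: prod_list_zero_iff)
  have "diff_op ws (\<lambda>r. \<Sum>l\<in>{1..n}. ch l * zh l ^ r) 0 = 0"
    unfolding diff_op_exp_sum using set_ws by (auto intro!: sum.neutral kill)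
  moreover have "diff_op ws (\<lambda>r. \<Sum>l\<in>{1..n}. c l * z l ^ r) 0 = c j * (\<Prod>w\<leftarrow>ws. z j - w)"
  proof -
    have "(\<Sum>l\<in>{1..n}-{j}. c l * (\<Prod>w\<leftarrow>ws. z l - w) * z l ^ 0) = 0"
      using set_ws by (auto intro!: sum.neutral kill)
    then show ?thesis unfolding diff_op_exp_sum
      using sum.remove[OF finite_atLeastAtMost j, of "\<lambda>l. c l * (\<Prod>w\<leftarrow>ws. z l - w) * z l ^ 0"] by simp
  qed
  moreover have "norm (diff_op ws (\<lambda>r. (\<Sum>l\<in>{1..n}. ch l * zh l ^ r) - (\<Sum>l\<in>{1..n}. c l * z l ^ r)) 0)
      \<le> 2 ^ length ws * B"
    using unit close len set_ws by (intro norm_diff_op_le[where R = 0]) auto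
  ultimately have "norm (c j * (\<Prod>w\<leftarrow>ws. z j - w)) \<le> 2 ^ (2*n-1) * B"
    unfolding diff_op_diff len by simp
  then show ?thesis unfolding prod_ws by (simp add: norm_mult mult.assoc)
qed

lemma jordan_inequality:
  fixes x :: real
  assumes "0 \<le> x" "x \<le> pi/2"
  shows "2/pi * x \<le> sin x"
proof (rule ccontr)
  assume neg: "\<not> 2/pi * x \<le> sin x"
  define g where "g t = sin t - 2/pi * t" for t :: real
  have g': "\<And>t. DERIV g t :> cos t - 2/pi"
    unfolding g_def by (auto intro!: derivative_eq_intros)
  have "g x < 0" using neg by (simp add: g_def)
  moreover have "g 0 = 0" "g (pi/2) = 0" by (auto simp: g_def)
  ultimately have "x \<noteq> 0" "x \<noteq> pi/2" by (metis less_irrefl)+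
  then have "0 < x" "x < pi/2" using assms by auto
  obtain z1 where z1: "0 < z1" "z1 < x" "g x - g 0 = (x - 0) * (cos z1 - 2/pi)"
    using MVT2[of 0 x g "\<lambda>t. cos t - 2/pi"] \<open>0 < x\<close> g' by blast
  obtain z2 where z2: "x < z2" "z2 < pi/2" "g (pi/2) - g x = (pi/2 - x) * (cos z2 - 2/pi)"
    using MVT2[of x "pi/2" g "\<lambda>t. cos t - 2/pi"] \<open>x < pi/2\<close> g' by blast
  have "x * (cos z1 - 2/pi) < 0" using z1(3) \<open>g 0 = 0\<close> \<open>g x < 0\<close> by simp
  then have "cos z1 < 2/pi" using \<open>0 < x\<close> by (simp add: mult_less_0_iff)
  have "0 < (pi/2 - x) * (cos z2 - 2/pi)" using z2(3) \<open>g (pi/2) = 0\<close> \<open>g x < 0\<close> by linarith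
  then have "2/pi < cos z2" using \<open>x < pi/2\<close> by (simp add: zero_less_mult_iff)
  have "cos z2 \<le> cos z1"
    using z1 z2 by (intro cos_monotone_0_pi_le) auto
  with \<open>cos z1 < 2/pi\<close> \<open>2/pi < cos z2\<close> show False by simp
qed

lemma norm_exp_i_diff_ge:
  fixes a b :: real
  assumes "\<bar>a - b\<bar> \<le> pi"
  shows "2/pi * \<bar>a - b\<bar> \<le> norm (exp (\<i> * of_real a) - exp (\<i> * of_real b))"
proof -
  have "exp (\<i> * of_real a) - exp (\<i> * of_real b) = exp (\<i> * of_real b) * (exp (\<i> * of_real (a - b)) - 1)"
    by (simp add: algebra_simps exp_add[symmetric])
  then have "norm (exp (\<i> * of_real a) - exp (\<i> * of_real b)) = 2 * \<bar>sin ((a - b)/2)\<bar>"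
    using dist_exp_i_1[of "a - b"] by (simp add: norm_mult)
  also have "\<bar>sin ((a - b)/2)\<bar> = sin (\<bar>a - b\<bar>/2)"
  proof (cases "b \<le> a")
    case True
    then show ?thesis using assms by (simp add: sin_ge_zero)
  next
    case False
    have "sin ((a - b)/2) = - sin ((b - a)/2)"
      by (metis minus_diff_eq minus_divide_left sin_minus)
    then show ?thesis using False assms by (simp add: sin_ge_zero)
  qed
  also have "2/pi * (\<bar>a - b\<bar>/2) \<le> sin (\<bar>a - b\<bar>/2)"
    using assms by (intro jordan_inequality) auto
  ultimately show ?thesis by simp
qed

lemma chord_prod_ge:
  fixes u :: real and v :: "nat \<Rightarrow> real"
  assumes "H > 0" "\<forall>q\<in>S. H * \<bar>u - v q\<bar> \<le> pi"
  shows "(2*H/pi) ^ card S * \<bar>\<Prod>q\<in>S. u - v q\<bar>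
           \<le> norm (\<Prod>q\<in>S. exp (\<i> * of_real (H * u)) - exp (\<i> * of_real (H * v q)))"
proof (cases "finite S")
  case True
  have "(2*H/pi) ^ card S * \<bar>\<Prod>q\<in>S. u - v q\<bar> = (\<Prod>q\<in>S. (2*H/pi) * \<bar>u - v q\<bar>)"
    unfolding prod.distrib prod_constant abs_prod ..
  also have "\<dots> = (\<Prod>q\<in>S. 2/pi * \<bar>H * u - H * v q\<bar>)"
    using assms(1) by (intro prod.cong) (auto simp: right_diff_distrib[symmetric] abs_mult)
  also have "\<dots> \<le> (\<Prod>q\<in>S. norm (exp (\<i> * of_real (H * u)) - exp (\<i> * of_real (H * v q))))"
    using assms by (intro prod_mono conjI norm_exp_i_diff_ge)
      (auto simp: right_diff_distrib[symmetric] abs_mult)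
  finally show ?thesis by (simp add: prod_norm)
qed simp

lemma FT_shifted_grid:
  "FT a y n (- \<Omega> + real r * H) =
     (\<Sum>l\<in>{1..n}. (a l * exp (\<i> * of_real (- \<Omega> * y l))) * exp (\<i> * of_real (H * y l)) ^ r)"
  unfolding FT_def
proof (rule sum.cong[OF refl])
  fix l
  have "\<i> * of_real (y l * (- \<Omega> + real r * H)) = \<i> * of_real (- \<Omega> * y l) + of_nat r * (\<i> * of_real (H * y l))"
    by (simp add: algebra_simps)
  then have "exp (\<i> * of_real (y l * (- \<Omega> + real r * H)))
      = exp (\<i> * of_real (- \<Omega> * y l)) * exp (\<i> * of_real (H * y l)) ^ r"
    by (simp only: exp_add exp_of_nat_mult)
  then show "a l * exp (\<i> * of_real (y l * (- \<Omega> + real r * H))) =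
      a l * exp (\<i> * of_real (- \<Omega> * y l)) * exp (\<i> * of_real (H * y l)) ^ r"
    by simp
qed

lemma FT_samples_atom_bound:
  assumes H: "H > 0"
    and Hpi: "\<forall>j\<in>{1..n}. \<forall>q\<in>{1..n}. H * \<bar>y j - yh q\<bar> \<le> pi \<and> H * \<bar>y j - y q\<bar> \<le> pi"
    and B: "\<forall>r\<le>2*n-1. cmod (FT ah yh n (- \<Omega> + real r * H) - FT a y n (- \<Omega> + real r * H)) \<le> B"
    and j: "j \<in> {1..n}"
  shows "cmod (a j) * (2*H/pi) ^ (2*n-1) * (\<bar>\<Prod>q\<in>{1..n}. y j - yh q\<bar> * \<bar>\<Prod>p\<in>{1..n}-{j}. y j - y p\<bar>)
           \<le> 2 ^ (2*n-1) * B"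
proof -
  define z where "z l = exp (\<i> * of_real (H * y l))" for l
  define zh where "zh l = exp (\<i> * of_real (H * yh l))" for l
  define c where "c l = a l * exp (\<i> * of_real (- \<Omega> * y l))" for l
  define ch where "ch l = ah l * exp (\<i> * of_real (- \<Omega> * yh l))" for l
  have close: "\<forall>r\<le>2*n-1. norm ((\<Sum>l\<in>{1..n}. ch l * zh l ^ r) - (\<Sum>l\<in>{1..n}. c l * z l ^ r)) \<le> B"
    using B by (simp only: FT_shifted_grid z_def zh_def c_def ch_def)
  have annihilated: "cmod (a j) * (norm (\<Prod>q\<in>{1..n}. z j - zh q) * norm (\<Prod>p\<in>{1..n}-{j}. z j - z p))
      \<le> 2 ^ (2*n-1) * B"
  proof -
    have "norm (c j) * norm (\<Prod>q\<in>{1..n}. z j - zh q) * norm (\<Prod>p\<in>{1..n}-{j}. z j - z p)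
        \<le> 2 ^ (2*n-1) * B"
      using close j by (intro exp_sum_annihilation_bound) (auto simp: z_def zh_def)
    then show ?thesis by (simp add: c_def norm_mult mult.assoc)
  qed
  have chord_hat: "(2*H/pi) ^ n * \<bar>\<Prod>q\<in>{1..n}. y j - yh q\<bar> \<le> norm (\<Prod>q\<in>{1..n}. z j - zh q)"
    using chord_prod_ge[OF H, of "{1..n}" "y j" yh] Hpi j by (simp add: z_def zh_def)
  have chord: "(2*H/pi) ^ (n-1) * \<bar>\<Prod>p\<in>{1..n}-{j}. y j - y p\<bar> \<le> norm (\<Prod>p\<in>{1..n}-{j}. z j - z p)"
    using chord_prod_ge[OF H, of "{1..n}-{j}" "y j" y] Hpi j by (simp add: z_def)
  have "2*n-1 = n + (n-1)" using j by simp
  then have "cmod (a j) * (2*H/pi) ^ (2*n-1) * (\<bar>\<Prod>q\<in>{1..n}. y j - yh q\<bar> * \<bar>\<Prod>p\<in>{1..n}-{j}. y j - y p\<bar>)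
      = cmod (a j) * (((2*H/pi) ^ n * \<bar>\<Prod>q\<in>{1..n}. y j - yh q\<bar>)
          * ((2*H/pi) ^ (n-1) * \<bar>\<Prod>p\<in>{1..n}-{j}. y j - y p\<bar>))"
    by (simp only: power_add ac_simps)
  also have "\<dots> \<le> cmod (a j) * (norm (\<Prod>q\<in>{1..n}. z j - zh q) * norm (\<Prod>p\<in>{1..n}-{j}. z j - z p))"
    using chord_hat chord H by (intro mult_left_mono mult_mono) auto
  also have "\<dots> \<le> 2 ^ (2*n-1) * B" by (rule annihilated)
  finally show ?thesis .
qed

lemma power_add_le_exp_mult:
  fixes N :: nat and x :: real
  assumes "0 < N" "- real N \<le> x"
  shows "(real N + x) ^ N \<le> exp x * real N ^ N"
proof -
  have "(real N + x) ^ N = real N ^ N * (1 + x / real N) ^ N"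
    using assms(1) by (simp add: power_mult_distrib[symmetric] field_simps)
  also have "\<dots> \<le> real N ^ N * exp x"
    using assms by (intro mult_left_mono exp_ge_one_plus_x_over_n_power_n) auto
  finally show ?thesis by (simp add: mult.commute)
qed

lemma odd_power_shift_le_exp: "(2 * real m + 3) ^ (2*m+1) \<le> exp 2 * (2 * real m + 1) ^ (2*m+1)"
  using power_add_le_exp_mult[of "2*m+1" 2] by (simp add: add.commute add.left_commute)

lemma less_exp_real: "real m + 1 \<le> 2 ^ m"
proof -
  have "real (Suc m) \<le> real (2 ^ m)" using less_exp[of m] by (simp only: of_nat_le_iff Suc_le_eq)
  then show ?thesis by simp
qed

lemma quartic_le:
  fixes x :: real
  assumes "0 \<le> x"
  shows "(2 * x + 3)^2 * (2 * x + 2) * (2 * x + 1) \<le> 16 * (x + 2) * (x + 1)^3"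
proof -
  have "(2 * x + 3)^2 * (2 * x + 2) * (2 * x + 1) = 16 * x^4 + 72 * x^3 + 116 * x^2 + 78 * x + 18"
    by (simp add: power2_eq_square power3_eq_cube power4_eq_xxxx algebra_simps)
  moreover have "16 * (x + 2) * (x + 1)^3 = 16 * x^4 + 80 * x^3 + 144 * x^2 + 112 * x + 32"
    by (simp add: power2_eq_square power3_eq_cube power4_eq_xxxx algebra_simps)
  moreover have "0 \<le> x^3" "0 \<le> x^2" using assms by auto
  ultimately show ?thesis using assms by linarith
qed

lemma fact_double_odd_power_le:
  fixes m :: nat
  assumes "m \<ge> 1"
  shows "2 * pi * sqrt pi * (2 * real m + 1) ^ (2*m+1) * fact (2*m)
          \<le> 4 * (real m + 1) * 16 ^ m * exp (2 * real m + 2) * (fact m)^4"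
  using assms
proof (induction m rule: nat_induct_at_least)
  case base
  have pi4: "pi \<le> 4" using pi_less_4 by simp
  have sq: "sqrt pi \<le> 2"
    using pi4 real_sqrt_le_mono[of pi 4] by simp
  have e: "exp (4::real) \<ge> 16"
  proof -
    have "exp (1::real) \<ge> 2" using exp_ge_add_one_self[of 1] by simp
    then have "exp (1::real) ^ 4 \<ge> 2 ^ 4" by (intro power_mono) auto
    then show ?thesis by (simp add: exp_of_nat_mult[symmetric])
  qed
  have "2 * pi * sqrt pi * 27 * 2 \<le> 2 * 4 * 2 * 27 * (2::real)"
    using pi4 sq pi_gt_zero by (intro mult_right_mono mult_mono) auto
  also have "\<dots> \<le> 4 * 2 * 16 * 16" by simp
  also have "\<dots> \<le> 4 * 2 * 16 * exp 4" using e by simp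
  finally show ?case by (simp add: numeral_eq_Suc)
next
  case (Suc m)
  define L where "L = 2 * pi * sqrt pi * (2 * real m + 1) ^ (2*m+1) * fact (2*m)"
  define R where "R = 4 * (real m + 1) * 16 ^ m * exp (2 * real m + 2) * (fact m)^4"
  have LR: "L \<le> R" using Suc.IH by (simp add: L_def R_def)
  have eq1: "(2 * real (Suc m) + 1) ^ (2 * Suc m + 1) = (2 * real m + 3)^2 * (2 * real m + 3) ^ (2*m+1)"
    by (simp add: power_add[symmetric] algebra_simps)
  have eq2: "fact (2 * Suc m) = (2 * real m + 2) * (2 * real m + 1) * (fact (2*m) :: real)"
    by (simp add: algebra_simps)
  have "2 * pi * sqrt pi * (2 * real (Suc m) + 1) ^ (2 * Suc m + 1) * fact (2 * Suc m)
      = (2 * real m + 3)^2 * (2 * real m + 2) * (2 * real m + 1) * (2 * pi * sqrt pi * (2 * real m + 3) ^ (2*m+1) * fact (2*m))"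
    unfolding eq1 eq2 by (simp add: algebra_simps)
  also have "\<dots> \<le> (2 * real m + 3)^2 * (2 * real m + 2) * (2 * real m + 1) * (exp 2 * L)"
  proof (rule mult_left_mono)
    have "2 * pi * sqrt pi * (2 * real m + 3) ^ (2*m+1) * fact (2*m)
        \<le> 2 * pi * sqrt pi * (exp 2 * (2 * real m + 1) ^ (2*m+1)) * fact (2*m)"
      using odd_power_shift_le_exp[of m] by (intro mult_right_mono mult_left_mono) auto
    then show "2 * pi * sqrt pi * (2 * real m + 3) ^ (2*m+1) * fact (2*m) \<le> exp 2 * L"
      by (simp add: L_def algebra_simps)
  qed simp
  also have "\<dots> \<le> (2 * real m + 3)^2 * (2 * real m + 2) * (2 * real m + 1) * (exp 2 * R)"
    using LR by (intro mult_left_mono) auto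
  also have "\<dots> \<le> 16 * (real m + 2) * (real m + 1)^3 * (exp 2 * R)"
    using quartic_le[of "real m"] by (intro mult_right_mono) (auto simp: R_def)
  also have "\<dots> = 4 * (real (Suc m) + 1) * 16 ^ Suc m * exp (2 * real (Suc m) + 2) * (fact (Suc m))^4"
  proof -
    have "exp (2 * real (Suc m) + 2) = exp 2 * exp (2 * real m + 2)"
      by (simp add: exp_add[symmetric] algebra_simps)
    moreover have "(fact (Suc m) :: real)^4 = (real m + 1)^4 * (fact m)^4"
    proof -
      have "(fact (Suc m) :: real) = (real m + 1) * fact m" by simp
      then show ?thesis by (simp only: power_mult_distrib)
    qed
    ultimately show ?thesis unfolding R_def
      by (simp add: power2_eq_square power3_eq_cube power4_eq_xxxx algebra_simps)
  qed
  finally show ?case .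
qed

lemma C_const_ge:
  assumes n: "n \<ge> 2"
  shows "4 ^ n * (pi * (2 * real n - 1) / 2) ^ (2*n-1) * real ((2*(n-1)) choose (n-1)) / (fact (n-1))^2
           \<le> C_const n * pi ^ (2*n-2)"
proof -
  define m where "m = n - 1"
  have m: "m \<ge> 1" "n = m + 1" using n by (auto simp: m_def)
  define X where "X = (2 * real m + 1) ^ (2*m+1)"
  define F where "F = (fact (2*m) :: real)"
  define fm where "fm = (fact m :: real)"
  have fm0: "fm > 0" by (simp add: fm_def)
  have sp: "sqrt pi > 0" by simp
  have key: "(2 * pi * sqrt pi * X * F) * (pi ^ (2*m) / (sqrt pi * fm^4))
      \<le> (4 * (real m + 1) * 16 ^ m * exp (2 * real m + 2) * fm^4) * (pi ^ (2*m) / (sqrt pi * fm^4))"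
    using fact_double_odd_power_le[OF m(1)] fm0 sp by (intro mult_right_mono) (auto simp: X_def F_def fm_def)
  have binom: "real ((2*m) choose m) = F / fm^2"
    using binomial_fact[of m "2*m"] by (simp add: F_def fm_def power2_eq_square mult_2)
  have lhs: "4 ^ n * (pi * (2 * real n - 1) / 2) ^ (2*n-1) * real ((2*(n-1)) choose (n-1)) / (fact (n-1))^2
      = (2 * pi * sqrt pi * X * F) * (pi ^ (2*m) / (sqrt pi * fm^4))"
  proof -
    have a: "2 * real n - 1 = 2 * real m + 1" using m by simp
    have b: "2*n-1 = 2*m+1" "2*(n-1) = 2*m" "n - 1 = m" using m by auto
    have c: "(pi * (2 * real m + 1) / 2) ^ (2*m+1) = pi ^ (2*m+1) * X / 2 ^ (2*m+1)"
      by (simp add: X_def power_divide power_mult_distrib)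
    have d0: "(2::real) ^ (2*m) = 4 ^ m" by (simp add: power_mult)
    have d: "(4::real) ^ n = 2 * 2 ^ (2*m+1)" using m d0 by simp
    show ?thesis unfolding a b c d binom using fm0 sp
      by (simp add: fm_def[symmetric] field_simps power_add power_mult_distrib)
  qed
  have rhs: "C_const n * pi ^ (2*n-2) = (4 * (real m + 1) * 16 ^ m * exp (2 * real m + 2) * fm^4) * (pi ^ (2*m) / (sqrt pi * fm^4))"
  proof -
    have b: "2*n-2 = 2*m" "4*n-2 = 4*m+2" using m by auto
    have e: "exp (2 * real n) = exp (2 * real m + 2)" using m by simp
    have f: "(2::real) ^ (4*m+2) = 4 * 16 ^ m" by (simp add: power_add power_mult)
    show ?thesis unfolding C_const_def b e f using fm0 sp m(2)
      by (simp add: field_simps)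
  qed
  show ?thesis unfolding lhs rhs by (rule key)
qed

text \<open>\<open>34.5744 = 5.88\<^sup>2\<close>.\<close>
lemma C_const_ratio_eq:
  assumes n: "n \<ge> 1"
  shows "C_const n * pi ^ (2*n-2) / (5.88 * pi * exp 1) ^ (2*n-1)
           = (real (n-1) + 1) * (16 / 34.5744) ^ (n-1) * (4 * exp 1 / (5.88 * pi * sqrt pi))"
proof -
  define m where "m = n - 1"
  have m: "n = m + 1" using n by (simp add: m_def)
  have e0: "exp (1::real) > 0" by simp
  have b: "2*n-2 = 2*m" "4*n-2 = 4*m+2" "2*n-1 = 2*m+1" using m by auto
  have e: "exp (2 * real n) = exp 1 ^ (2*m+2)"
  proof -
    have "exp (2 * real n) = exp (real (2*m+2) * 1)" using m by simp
    also have "\<dots> = exp 1 ^ (2*m+2)" by (rule exp_of_nat_mult)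
    finally show ?thesis .
  qed
  have f: "(2::real) ^ (4*m+2) = 4 * 16 ^ m" by (simp add: power_add power_mult)
  have g: "(5.88 * pi * exp 1) ^ (2*m+1) = 5.88 * 34.5744 ^ m * pi ^ (2*m+1) * exp 1 ^ (2*m+1)"
  proof -
    have "(5.88 * pi * exp 1) ^ (2*m+1) = (5.88 * pi * exp 1) * ((5.88 * pi * exp 1)^2) ^ m"
      by (simp add: power_add power_mult)
    also have "((5.88 * pi * exp 1)^2) ^ m = 34.5744 ^ m * (pi^2)^m * ((exp 1)^2)^m"
    proof -
      have "(5.88 * pi * exp 1)^2 = 34.5744 * pi^2 * (exp 1)^2" by (simp add: power2_eq_square)
      then show ?thesis by (simp only: power_mult_distrib)
    qed
    finally show ?thesis by (simp add: power_add power_mult)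
  qed
  have h: "(16 / 34.5744 :: real) ^ m = 16 ^ m / 34.5744 ^ m" by (rule power_divide)
  have k: "(10000::real)^m = 16^m * 625^m"
  proof -
    have "(16::real)^m * 625^m = (16*625)^m" by (rule power_mult_distrib[symmetric])
    then show ?thesis by simp
  qed
  show ?thesis unfolding m_def[symmetric] C_const_def b e f g h using m e0 pi_gt_zero
    by (simp add: field_simps power_add k)
qed

lemma C_const_lt_half:
  assumes n: "n \<ge> 2"
  shows "C_const n * pi ^ (2*n-2) / (5.88 * pi * exp 1) ^ (2*n-1) < 1/2"
proof -
  define m where "m = n - 1"
  have sqrt_pi: "1.7 < sqrt pi"
  proof -
    have "sqrt (2.89::real) = 1.7" by (rule real_sqrt_unique) (simp_all add: power2_eq_square)
    moreover have "sqrt (2.89::real) < sqrt pi" using pi_gt3 by (intro real_sqrt_less_mono) simp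
    ultimately show ?thesis by linarith
  qed
  have "(real m + 1) * (16 / 34.5744) ^ m \<le> 2 ^ m * (1/2) ^ m"
    using less_exp_real[of m] by (intro mult_mono power_mono) auto
  also have "\<dots> = 1" by (simp add: power_mult_distrib[symmetric])
  finally have p1: "(real m + 1) * (16 / 34.5744) ^ m \<le> 1" .
  have "5.88 * 3 * 1.7 < 5.88 * pi * sqrt pi"
    using mult_strict_mono[of 3 pi "1.7" "sqrt pi"] pi_gt3 sqrt_pi by auto
  then have p2: "4 * exp 1 / (5.88 * pi * sqrt pi) < 1/2"
    using exp_le pi_gt_zero by (simp add: field_simps)
  have "(real m + 1) * (16 / 34.5744) ^ m * (4 * exp 1 / (5.88 * pi * sqrt pi))
      \<le> 1 * (4 * exp 1 / (5.88 * pi * sqrt pi))"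
    using p1 by (intro mult_right_mono) auto
  moreover have "1 \<le> n" using n by simp
  ultimately show ?thesis unfolding C_const_ratio_eq[OF \<open>1 \<le> n\<close>] m_def using p2 by linarith
qed

lemma lagrange_err_le:
  fixes y yh :: "nat \<Rightarrow> real"
  assumes n: "n \<ge> 1" and sep: "separated d y {1..n}" and d: "d > 0"
    and K: "\<forall>j\<in>{1..n}. \<bar>\<Prod>q\<in>{1..n}. y j - yh q\<bar> * \<bar>\<Prod>p\<in>{1..n}-{j}. y j - y p\<bar> \<le> K"
  shows "lagrange_err y yh n \<le> K * real ((2*(n-1)) choose (n-1)) / ((fact (n-1))^2 * d^(2*(n-1)))"
proof -
  define rank where "rank j = card {p\<in>{1..n}. y j < y p}" for j
  have bound: "\<bar>\<Prod>q\<in>{1..n}. y j - yh q\<bar> / \<bar>\<Prod>p\<in>{1..n}-{j}. y j - y p\<bar>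
      \<le> K / d^(2*(n-1)) * (1 / (fact (rank j) * fact (n - 1 - rank j))^2)" if j: "j \<in> {1..n}" for j
  proof -
    define F where "F = \<bar>\<Prod>q\<in>{1..n}. y j - yh q\<bar>"
    define G where "G = \<bar>\<Prod>p\<in>{1..n}-{j}. y j - y p\<bar>"
    define low where "low = d ^ (n - 1) * (fact (rank j) * fact (n - 1 - rank j))"
    have "card {p\<in>{1..n}. y p < y j} = n - 1 - rank j"
      using card_above_below(2)[OF sep d j] unfolding rank_def by linarith
    then have "low \<le> G"
      using separated_prod_others_ge[OF sep d j] unfolding low_def G_def rank_def by simp
    moreover have "0 < low" using d by (simp add: low_def)
    ultimately have "0 < G" by linarith
    have "F * G \<le> K" using K j by (simp add: F_def G_def)
    have "F / G = (F * G) / G^2" using \<open>0 < G\<close> by (simp add: power2_eq_square)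
    also have "\<dots> \<le> K / G^2" using \<open>F * G \<le> K\<close> by (intro divide_right_mono) auto
    also have "\<dots> \<le> K / low^2"
    proof (rule divide_left_mono)
      show "0 \<le> K" using \<open>F * G \<le> K\<close> \<open>0 < G\<close> by (smt (verit) F_def abs_ge_zero mult_nonneg_nonneg)
      show "low^2 \<le> G^2" using \<open>low \<le> G\<close> \<open>0 < low\<close> by (intro power_mono) auto
      show "0 < G^2 * low^2" using \<open>0 < G\<close> \<open>0 < low\<close> by simp
    qed
    also have "\<dots> = K / d^(2*(n-1)) * (1 / (fact (rank j) * fact (n - 1 - rank j))^2)"
      by (simp add: low_def power_mult_distrib power_mult[symmetric] mult.commute)
    finally show ?thesis unfolding F_def G_def .
  qed
  have "lagrange_err y yh n \<le> (\<Sum>j\<in>{1..n}. K / d^(2*(n-1)) * (1 / (fact (rank j) * fact (n - 1 - rank j))^2))"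
    unfolding lagrange_err_def by (intro sum_mono bound)
  also have "\<dots> = K / d^(2*(n-1)) * (\<Sum>k<n. 1 / (fact k * fact (n - 1 - k))^2)"
    unfolding sum_distrib_left[symmetric] rank_def
    by (subst sum.reindex_bij_betw[OF bij_betw_rank[OF sep d]]) (rule refl)
  also have "\<dots> = K * real ((2*(n-1)) choose (n-1)) / ((fact (n-1))^2 * d^(2*(n-1)))"
    unfolding sum_inverse_fact_sq[OF n] by simp
  finally show ?thesis .
qed

lemma prod_dists_le:
  fixes a ah :: "nat \<Rightarrow> complex" and y yh :: "nat \<Rightarrow> real"
  assumes \<Omega>: "0 < \<Omega>" and H: "\<Omega> \<le> H * (2 * real n - 1)"
    and Hpi: "\<forall>j\<in>{1..n}. \<forall>q\<in>{1..n}. H * \<bar>y j - yh q\<bar> \<le> pi \<and> H * \<bar>y j - y q\<bar> \<le> pi"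
    and B: "\<forall>r\<le>2*n-1. cmod (FT ah yh n (- \<Omega> + real r * H) - FT a y n (- \<Omega> + real r * H)) \<le> 2 * \<sigma>"
    and m: "0 < m" "\<forall>j\<in>{1..n}. m \<le> cmod (a j)"
  shows "\<forall>j\<in>{1..n}. \<bar>\<Prod>q\<in>{1..n}. y j - yh q\<bar> * \<bar>\<Prod>p\<in>{1..n}-{j}. y j - y p\<bar>
           \<le> 4^n * (\<sigma> / m) * (pi * (2 * real n - 1) / (2 * \<Omega>)) ^ (2*n-1)"
proof
  fix j assume j: "j \<in> {1..n}"
  define P where "P = \<bar>\<Prod>q\<in>{1..n}. y j - yh q\<bar> * \<bar>\<Prod>p\<in>{1..n}-{j}. y j - y p\<bar>"
  define c where "c = (2 * \<Omega> / (pi * (2 * real n - 1))) ^ (2*n-1)"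
  have n: "2 * real n - 1 > 0" using j by auto
  have "0 < H * (2 * real n - 1)" using \<Omega> H by linarith
  then have "0 < H" using n by (rule zero_less_mult_pos2)
  have "\<Omega> / (2 * real n - 1) \<le> H" using H n by (simp add: divide_le_eq)
  then have "2/pi * (\<Omega> / (2 * real n - 1)) \<le> 2/pi * H" by (intro mult_left_mono) auto
  then have "c \<le> (2*H/pi) ^ (2*n-1)"
    unfolding c_def using \<Omega> n by (intro power_mono) auto
  moreover have "0 < c" using \<Omega> n by (simp add: c_def)
  ultimately have "m * c * P \<le> cmod (a j) * (2*H/pi) ^ (2*n-1) * P"
    using m j by (intro mult_mono) (auto simp: P_def)
  also have "\<dots> \<le> 2 ^ (2*n-1) * (2 * \<sigma>)"
    unfolding P_def using FT_samples_atom_bound[OF \<open>0 < H\<close> Hpi B j] .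
  also have "\<dots> = 4^n * \<sigma>"
  proof -
    have "2*n = Suc (2*n-1)" using j by auto
    then have "(2::real) ^ (2*n) = 2 ^ Suc (2*n-1)" by (rule arg_cong)
    then have "(2::real) ^ (2*n-1) * 2 = 4 ^ n" by (simp add: power_mult)
    then show ?thesis by simp
  qed
  finally have "P \<le> 4^n * \<sigma> / (m * c)"
    using m \<open>0 < c\<close> by (simp add: pos_le_divide_eq mult.commute mult.left_commute)
  also have "\<dots> = 4^n * (\<sigma> / m) * (pi * (2 * real n - 1) / (2 * \<Omega>)) ^ (2*n-1)"
    by (simp add: c_def power_divide)
  finally show "P \<le> 4^n * (\<sigma> / m) * (pi * (2 * real n - 1) / (2 * \<Omega>)) ^ (2*n-1)" .
qed

lemma lagrange_err_le_resolution:
  fixes y yh :: "nat \<Rightarrow> real"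
  assumes n: "n \<ge> 2" and \<Omega>: "0 < \<Omega>" and sep: "separated d y {1..n}" and d: "d > 0" and t: "0 \<le> t"
    and K: "\<forall>j\<in>{1..n}. \<bar>\<Prod>q\<in>{1..n}. y j - yh q\<bar> * \<bar>\<Prod>p\<in>{1..n}-{j}. y j - y p\<bar>
              \<le> 4^n * t * (pi * (2 * real n - 1) / (2 * \<Omega>)) ^ (2*n-1)"
  shows "lagrange_err y yh n \<le> C_const n / \<Omega> * (pi / (\<Omega> * d)) ^ (2*n-2) * t"
proof -
  define b where "b = real ((2*(n-1)) choose (n-1)) / (fact (n-1))^2"
  have "2*n-1 = Suc (2*n-2)" "2*(n-1) = 2*n-2" using n by auto
  then have pow: "\<Omega> ^ (2*n-1) = \<Omega> * \<Omega> ^ (2*n-2)" "2*(n-1) = 2*n-2" by simp_all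
  have "lagrange_err y yh n
      \<le> 4^n * t * (pi * (2 * real n - 1) / (2 * \<Omega>)) ^ (2*n-1) * real ((2*(n-1)) choose (n-1))
           / ((fact (n-1))^2 * d^(2*(n-1)))"
    using n by (intro lagrange_err_le[OF _ sep d K]) auto
  also have "\<dots> = t * (4 ^ n * (pi * (2 * real n - 1) / 2) ^ (2*n-1) * b) / (\<Omega> ^ (2*n-1) * d ^ (2*n-2))"
    unfolding b_def pow(2) by (simp add: power_divide mult_ac)
  also have "\<dots> \<le> t * (C_const n * pi ^ (2*n-2)) / (\<Omega> ^ (2*n-1) * d ^ (2*n-2))"
    using C_const_ge[OF n] t \<Omega> d by (intro divide_right_mono mult_left_mono) (auto simp: b_def)
  also have "\<dots> = C_const n / \<Omega> * (pi / (\<Omega> * d)) ^ (2*n-2) * t"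
    unfolding pow(1) by (simp add: power_divide power_mult_distrib mult_ac)
  finally show ?thesis .
qed

lemma resolution_lt_half:
  assumes n: "n \<ge> 2" and \<Omega>: "0 < \<Omega>" and t: "0 < t"
    and d: "d \<ge> 5.88 * pi * exp 1 / \<Omega> * t powr (1 / (2 * real n - 1))"
  shows "C_const n / \<Omega> * (pi / (\<Omega> * d)) ^ (2*n-2) * t < d / 2"
proof -
  define c where "c = 5.88 * pi * exp 1"
  have "0 < c" by (simp add: c_def)
  have k: "2 * real n - 1 > 0" "real (2*n-1) = 2 * real n - 1" using n by auto
  have "0 < d" using d \<Omega> t \<open>0 < c\<close> by (smt (verit) c_def divide_pos_pos mult_pos_pos powr_gt_zero)
  have "t = (t powr (1 / (2 * real n - 1))) ^ (2*n-1)"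
    using t k by (simp add: powr_realpow[symmetric] powr_powr)
  also have "\<dots> \<le> (d * \<Omega> / c) ^ (2*n-1)"
    using d \<Omega> \<open>0 < c\<close> by (intro power_mono) (auto simp: c_def field_simps)
  finally have "t \<le> (d * \<Omega> / c) ^ (2*n-1)" .
  have "2*n-1 = Suc (2*n-2)" using n by auto
  then have pow: "\<Omega> ^ (2*n-1) = \<Omega> * \<Omega> ^ (2*n-2)" "d ^ (2*n-1) = d * d ^ (2*n-2)" by simp_all
  have "C_const n / \<Omega> * (pi / (\<Omega> * d)) ^ (2*n-2) * t
      \<le> C_const n / \<Omega> * (pi / (\<Omega> * d)) ^ (2*n-2) * (d * \<Omega> / c) ^ (2*n-1)"
    using \<open>t \<le> _\<close> \<Omega> \<open>0 < d\<close> by (intro mult_left_mono) (auto simp: C_const_def)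
  also have "\<dots> = d * (C_const n * pi ^ (2*n-2) / c ^ (2*n-1))"
    using \<Omega> \<open>0 < d\<close> \<open>0 < c\<close> unfolding power_divide power_mult_distrib pow by (simp add: field_simps)
  also have "\<dots> < d * (1/2)"
    using C_const_lt_half[OF n] \<open>0 < d\<close> unfolding c_def by (intro mult_strict_left_mono)
  finally show ?thesis by simp
qed

lemma matching_of_lagrange_err:
  fixes y yh :: "nat \<Rightarrow> real"
  assumes inj: "inj_on y {1..n}" and sep: "separated d y {1..n}" and d: "d > 0"
    and small: "lagrange_err y yh n < d / 2"
  shows "within_nbhd y n (d / 2) yh \<and>
    (\<exists>\<pi>. bij_betw \<pi> {1..n} {1..n} \<and> (\<forall>j\<in>{1..n}. \<bar>yh (\<pi> j) - y j\<bar> \<le> lagrange_err y yh n))"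
proof -
  define I where "I k = {y k - d/2 <..< y k + d/2}" for k
  have unique: "k = l" if "k \<in> {1..n}" "l \<in> {1..n}" "x \<in> I k" "x \<in> I l" for k l x
  proof (rule ccontr)
    assume "k \<noteq> l"
    then have "d \<le> \<bar>y k - y l\<bar>" using sep that(1,2) by (intro separatedD)
    moreover have "\<bar>y k - y l\<bar> < d" using that(3,4) by (auto simp: I_def abs_less_iff)
    ultimately show False by simp
  qed
  have close_in: "yh q \<in> I k" if "\<bar>yh q - y k\<bar> \<le> lagrange_err y yh n" for q k
    using that small by (auto simp: I_def abs_le_iff)
  have "within_nbhd y n (d / 2) yh"
    unfolding within_nbhd_def
  proof (intro conjI ballI impI)
    fix k l assume "k \<in> {1..n}" "l \<in> {1..n}" "k \<noteq> l"
    then show "{y k - d / 2<..<y k + d / 2} \<inter> {y l - d / 2<..<y l + d / 2} = {}"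
      using unique unfolding I_def by blast
  next
    fix q assume "q \<in> {1..n}"
    then obtain k where "k \<in> {1..n}" "yh q \<in> I k"
      using lagrange_err_close_node[OF inj] close_in by blast
    then show "\<exists>!k. k \<in> {1..n} \<and> yh q \<in> {y k - d / 2<..<y k + d / 2}"
      using unique unfolding I_def by blast
  qed
  moreover
  define \<pi> where "\<pi> k = (SOME q. q \<in> {1..n} \<and> yh q \<in> I k)" for k
  have \<pi>: "\<pi> k \<in> {1..n} \<and> yh (\<pi> k) \<in> I k" if "k \<in> {1..n}" for k
    unfolding \<pi>_def I_def
    by (rule someI_ex) (use lagrange_err_root_near_node[OF inj sep d that small] in blast)
  have "inj_on \<pi> {1..n}"
    using \<pi> unique by (intro inj_onI) metis
  moreover have "\<pi> ` {1..n} \<subseteq> {1..n}" using \<pi> by auto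
  ultimately have "bij_betw \<pi> {1..n} {1..n}"
    by (simp add: bij_betw_def card_image card_subset_eq)
  moreover have "\<bar>yh (\<pi> k) - y k\<bar> \<le> lagrange_err y yh n" if k: "k \<in> {1..n}" for k
  proof -
    obtain k' where "k' \<in> {1..n}" "\<bar>yh (\<pi> k) - y k'\<bar> \<le> lagrange_err y yh n"
      using lagrange_err_close_node[OF inj] \<pi>[OF k] by blast
    moreover from this have "k' = k" using unique \<pi>[OF k] close_in k by blast
    ultimately show ?thesis by simp
  qed
  ultimately show ?thesis using \<open>within_nbhd y n (d / 2) yh\<close> by blast
qed

lemma d_min_pos_separated:
  assumes n: "2 \<le> n" and inj: "inj_on y {1..n}"
  shows "0 < d_min y n" and "separated (d_min y n) y {1..n}"
proof -
  define D where "D = {\<bar>y p - y j\<bar> | p j. p \<in> {1..n} \<and> j \<in> {1..n} \<and> p \<noteq> j}"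
  have "D \<subseteq> (\<lambda>(p, j). \<bar>y p - y j\<bar>) ` ({1..n} \<times> {1..n})" by (auto simp: D_def)
  then have "finite D" by (rule finite_subset) auto
  have "\<bar>y 1 - y 2\<bar> \<in> D" using n unfolding D_def by force
  then have "d_min y n \<in> D" unfolding d_min_def D_def[symmetric] using \<open>finite D\<close> by (intro Min_in) auto
  then obtain p j where "d_min y n = \<bar>y p - y j\<bar>" "p \<in> {1..n}" "j \<in> {1..n}" "p \<noteq> j"
    unfolding D_def by blast
  then show "0 < d_min y n" using inj by (auto dest: inj_onD)
  show "separated (d_min y n) y {1..n}"
    unfolding separated_def
  proof (intro ballI impI)
    fix p q assume "p \<in> {1..n}" "q \<in> {1..n}" "p \<noteq> q"
    then have "\<bar>y p - y q\<bar> \<in> D" unfolding D_def by blast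
    then show "d_min y n \<le> \<bar>y p - y q\<bar>" unfolding d_min_def D_def[symmetric] using \<open>finite D\<close> by simp
  qed
qed

lemma m_min_pos_le:
  assumes n: "1 \<le> n" and a: "\<forall>j\<in>{1..n}. a j \<noteq> 0"
  shows "0 < m_min a n" and "\<forall>j\<in>{1..n}. m_min a n \<le> cmod (a j)"
proof -
  have "m_min a n \<in> (\<lambda>j. cmod (a j)) ` {1..n}"
    unfolding m_min_def using n by (intro Min_in) auto
  then show "0 < m_min a n" using a by auto
  show "\<forall>j\<in>{1..n}. m_min a n \<le> cmod (a j)" unfolding m_min_def by auto
qed

lemma sup_dist_ge:
  "q \<in> {1..M} \<Longrightarrow> cmod (FT a y n (sample_pt \<Omega> M q) - Y q) \<le> sup_dist a y n \<Omega> M Y"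
  unfolding sup_dist_def by (intro Max_ge) auto

lemma FT_diff_le_sup_dist:
  assumes "q \<in> {1..M}"
  shows "cmod (FT ah yh n (sample_pt \<Omega> M q) - FT a y n (sample_pt \<Omega> M q))
           \<le> sup_dist ah yh n \<Omega> M Y + sup_dist a y n \<Omega> M Y"
proof -
  have "cmod (FT ah yh n (sample_pt \<Omega> M q) - FT a y n (sample_pt \<Omega> M q))
      \<le> cmod (FT ah yh n (sample_pt \<Omega> M q) - Y q) + cmod (FT a y n (sample_pt \<Omega> M q) - Y q)"
    using norm_triangle_ineq4[of "FT ah yh n (sample_pt \<Omega> M q) - Y q" "FT a y n (sample_pt \<Omega> M q) - Y q"]
    by simp
  then show ?thesis using sup_dist_ge[OF assms] by (smt (verit))
qed

text \<open>Every \<open>s\<close>-th sample, \<open>s = (M - 1) div k\<close>, gives \<open>k + 1\<close> equispaced frequencies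
  \<open>-\<Omega> + r H\<close> with \<open>k H\<close> between \<open>\<Omega>\<close> and \<open>2 \<Omega>\<close>.\<close>
lemma sample_pt_stride:
  fixes M k :: nat
  assumes k: "1 \<le> k" "k < M" and \<Omega>: "0 < \<Omega>"
  obtains H where "\<Omega> \<le> H * real k" "H * real k \<le> 2 * \<Omega>"
    "\<forall>r\<le>k. \<exists>q\<in>{1..M}. sample_pt \<Omega> M q = - \<Omega> + real r * H"
proof
  define s where "s = (M - 1) div k"
  define H where "H = 2 * \<Omega> * real s / (real M - 1)"
  have M: "0 < real M - 1" "real (M - 1) = real M - 1" using k by (auto simp: of_nat_diff)
  have "s * k \<le> M - 1" unfolding s_def by (rule div_times_less_eq_dividend)
  then have "real s * real k \<le> real M - 1" using M(2) by (metis of_nat_le_iff of_nat_mult)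
  have "H * real k = 2 * \<Omega> * (real s * real k) / (real M - 1)" by (simp add: H_def)
  also have "\<dots> \<le> 2 * \<Omega> * (real M - 1) / (real M - 1)"
    using \<open>real s * real k \<le> real M - 1\<close> \<Omega> M(1) by (intro divide_right_mono mult_left_mono) auto
  finally show "H * real k \<le> 2 * \<Omega>" using M(1) by simp
  have "M - 1 < (s + 1) * k" unfolding s_def using k by (simp add: dividend_less_div_times)
  moreover have "1 \<le> s" unfolding s_def using k by (simp add: div_greater_zero_iff Suc_le_eq)
  then have "k \<le> s * k" by simp
  moreover have "(s + 1) * k = s * k + k" "2 * s * k = s * k + s * k" by simp_all
  ultimately have "M - 1 \<le> 2 * s * k" by linarith
  then have "real M - 1 \<le> 2 * real s * real k" using M by (metis of_nat_le_iff of_nat_mult of_nat_numeral)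
  have "\<Omega> = \<Omega> * (real M - 1) / (real M - 1)" using M(1) by simp
  also have "\<dots> \<le> \<Omega> * (2 * real s * real k) / (real M - 1)"
    using \<open>real M - 1 \<le> 2 * real s * real k\<close> \<Omega> M(1) by (intro divide_right_mono mult_left_mono) auto
  also have "\<dots> = H * real k" by (simp add: H_def)
  finally show "\<Omega> \<le> H * real k" .
  show "\<forall>r\<le>k. \<exists>q\<in>{1..M}. sample_pt \<Omega> M q = - \<Omega> + real r * H"
  proof (intro allI impI)
    fix r assume "r \<le> k"
    then have "s * r \<le> M - 1" using \<open>s * k \<le> M - 1\<close> by (meson le_trans mult_le_mono2)
    then have "1 + s * r \<in> {1..M}" using k by auto
    moreover have "sample_pt \<Omega> M (1 + s * r) = - \<Omega> + real r * H"
      unfolding sample_pt_def H_def using M by (simp add: field_simps)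
    ultimately show "\<exists>q\<in>{1..M}. sample_pt \<Omega> M q = - \<Omega> + real r * H" by blast
  qed
qed

lemma I_int_scaled_dist_le_pi:
  assumes "u \<in> I_int n \<Omega>" "v \<in> I_int n \<Omega>" and \<Omega>: "0 < \<Omega>"
    and H: "0 \<le> H" "H * (2 * real n - 1) \<le> 2 * \<Omega>"
  shows "H * \<bar>u - v\<bar> \<le> pi"
proof -
  have "\<bar>u - v\<bar> \<le> (real n - 1) * pi / \<Omega>"
    using assms(1,2) \<Omega> by (auto simp: I_int_def field_simps abs_le_iff)
  then have "H * \<bar>u - v\<bar> \<le> H * ((real n - 1) * pi / \<Omega>)"
    using H(1) by (rule mult_left_mono)
  also have "\<dots> = (H * (real n - 1)) * pi / \<Omega>" by simp
  also have "\<dots> \<le> \<Omega> * pi / \<Omega>"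
  proof -
    have "2 * (H * (real n - 1)) + H \<le> 2 * \<Omega>" using H(2) by (simp add: algebra_simps)
    then have "H * (real n - 1) \<le> \<Omega>" using H(1) by linarith
    then show ?thesis using \<Omega> by (intro divide_right_mono mult_right_mono) auto
  qed
  finally show ?thesis using \<Omega> by simp
qed

lemma sup_dist_nonneg:
  assumes "1 \<le> M"
  shows "0 \<le> sup_dist a y n \<Omega> M Y"
proof -
  have "1 \<in> {1..M}" using assms by simp
  then show ?thesis using sup_dist_ge norm_ge_zero order_trans by blast
qed

lemma common_sample_step:
  assumes n: "1 \<le> n" and M: "2 * n < M" and \<Omega>: "0 < \<Omega>"
    and I: "\<forall>j\<in>{1..n}. y j \<in> I_int n \<Omega>" "\<forall>j\<in>{1..n}. yh j \<in> I_int n \<Omega>"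
    and fit: "sup_dist a y n \<Omega> M Y < \<sigma>" "sup_dist ah yh n \<Omega> M Y < \<sigma>"
  obtains H where "\<Omega> \<le> H * (2 * real n - 1)"
    "\<forall>j\<in>{1..n}. \<forall>q\<in>{1..n}. H * \<bar>y j - yh q\<bar> \<le> pi \<and> H * \<bar>y j - y q\<bar> \<le> pi"
    "\<forall>r\<le>2*n-1. cmod (FT ah yh n (- \<Omega> + real r * H) - FT a y n (- \<Omega> + real r * H)) \<le> 2 * \<sigma>"
proof -
  have k: "real (2*n-1) = 2 * real n - 1" "1 \<le> 2*n-1" "2*n-1 < M" using n M by auto
  have "1 \<le> n" using n by simp
  then obtain H where H: "\<Omega> \<le> H * (2 * real n - 1)" "H * (2 * real n - 1) \<le> 2 * \<Omega>"
      and grid: "\<forall>r\<le>2*n-1. \<exists>q\<in>{1..M}. sample_pt \<Omega> M q = - \<Omega> + real r * H"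
    using sample_pt_stride[OF k(2,3) \<Omega>] unfolding k(1) by blast
  have "0 < H * (2 * real n - 1)" using H(1) \<Omega> by linarith
  then have "0 \<le> H" using n by (simp add: zero_less_mult_iff)
  then have close: "\<forall>j\<in>{1..n}. \<forall>q\<in>{1..n}. H * \<bar>y j - yh q\<bar> \<le> pi \<and> H * \<bar>y j - y q\<bar> \<le> pi"
    using I_int_scaled_dist_le_pi[OF _ _ \<Omega> _ H(2)] I by blast
  have "\<forall>r\<le>2*n-1. cmod (FT ah yh n (- \<Omega> + real r * H) - FT a y n (- \<Omega> + real r * H)) \<le> 2 * \<sigma>"
  proof (intro allI impI)
    fix r assume "r \<le> 2*n-1"
    then obtain q where "q \<in> {1..M}" "sample_pt \<Omega> M q = - \<Omega> + real r * H" using grid by blast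
    then show "cmod (FT ah yh n (- \<Omega> + real r * H) - FT a y n (- \<Omega> + real r * H)) \<le> 2 * \<sigma>"
      using FT_diff_le_sup_dist[of q M ah yh n \<Omega> a y Y] fit by simp
  qed
  with H(1) close show ?thesis by (rule that)
qed

theorem theorem2p2:
  fixes n M :: nat and \<Omega> \<sigma> :: real
    and a ah :: "nat \<Rightarrow> complex" and y yh :: "nat \<Rightarrow> real" and Y :: "nat \<Rightarrow> complex"
  assumes "n \<ge> 2" and "M > 2 * n" and "\<Omega> > 0"
    and "\<forall>j\<in>{1..n}. a j \<noteq> 0"
    and "inj_on y {1..n}"
    and "\<forall>j\<in>{1..n}. y j \<in> I_int n \<Omega>"
    and "sup_dist a y n \<Omega> M Y < \<sigma>"
    and "d_min y n \<ge> 5.88 * pi * exp 1 / \<Omega> * (\<sigma> / m_min a n) powr (1 / (2 * real n - 1))"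
    and "\<forall>j\<in>{1..n}. yh j \<in> I_int n \<Omega>"
    and "sup_dist ah yh n \<Omega> M Y < \<sigma>"
  shows "within_nbhd y n (d_min y n / 2) yh \<and>
    (\<exists>\<pi>. bij_betw \<pi> {1..n} {1..n} \<and>
      (\<forall>j\<in>{1..n}. \<bar>yh (\<pi> j) - y j\<bar> \<le>
         C_const n / \<Omega> * (pi / (\<Omega> * d_min y n)) ^ (2 * n - 2) * (\<sigma> / m_min a n)))"
proof -
  note n = assms(1) and \<Omega> = assms(3) and inj = assms(5)
  define d where "d = d_min y n"
  define t where "t = \<sigma> / m_min a n"
  have d: "0 < d" "separated d y {1..n}" unfolding d_def using d_min_pos_separated[OF n inj] by auto
  have m: "0 < m_min a n" "\<forall>j\<in>{1..n}. m_min a n \<le> cmod (a j)"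
    using m_min_pos_le[of n a] n assms(4) by auto
  have "0 < t"
    using sup_dist_nonneg[of M a y n \<Omega> Y] assms(2,7) m(1) by (simp add: t_def)
  have "1 \<le> n" using n by simp
  then obtain H where H: "\<Omega> \<le> H * (2 * real n - 1)"
      "\<forall>j\<in>{1..n}. \<forall>q\<in>{1..n}. H * \<bar>y j - yh q\<bar> \<le> pi \<and> H * \<bar>y j - y q\<bar> \<le> pi"
      "\<forall>r\<le>2*n-1. cmod (FT ah yh n (- \<Omega> + real r * H) - FT a y n (- \<Omega> + real r * H)) \<le> 2 * \<sigma>"
    by (rule common_sample_step[OF _ assms(2,3,6,9,7,10)])
  have err: "lagrange_err y yh n \<le> C_const n / \<Omega> * (pi / (\<Omega> * d)) ^ (2*n-2) * t"
    using prod_dists_le[OF \<Omega> H m] \<open>0 < t\<close>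
    by (intro lagrange_err_le_resolution[OF n \<Omega> d(2,1)]) (auto simp: t_def)
  also have "\<dots> < d / 2"
    using resolution_lt_half[OF n \<Omega> \<open>0 < t\<close>] assms(8) by (simp add: d_def t_def)
  finally show ?thesis
    using err matching_of_lagrange_err[OF inj d(2,1)] unfolding d_def t_def by (meson order_trans)
qed

end
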